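(* Let $S$ be a convex real analytic surface in $\mathbb{R}^3$ whose oriented normal lines are given, near the normal direction $\xi=0$, by $\xi\mapsto(\xi,F(\xi,\bar\xi))$ with $F=\sum_{n,m\ge 0}A_{nm}\xi^n\bar\xi^m$ a convergent power series satisfying $\partial\big(F/(1+\xi\bar\xi)^2\big)=\bar\partial\big(\bar F/(1+\xi\bar\xi)^2\big)$. Suppose $\xi=0$ is an isolated umbilic point which is non-degenerate of order $N\ge2$, with $A_{N1}\neq0$, write $N=2l+1$ or $N=2l+2$, and let \[ P_N(\zeta)=\sum_{n=0}^N (N-n+1)\frac{A_{n\,N-n+1}}{A_{N1}}\zeta^n=\prod_{n=1}^N(\zeta-\zeta_n). \] Define $\Delta_k^N$ by $\binom{N}{k}\Delta_k^N=\sum_{1\le i_1<\dots<i_k\le N}\zeta_{i_1}\cdots\zeta_{i_k}$ (so that $P_N(\zeta)=\sum_{k=0}^N\binom{N}{k}\Delta_k^N\zeta^{N-k}$). Then \[ |\Delta_{N-2}^N|=1\qquad\text{and}\qquad \Delta_n^N=\Delta_{N-2}^N\,\overline{\Delta_{N-2-n}^N}\quad\text{for } 1\le n\le l-1. \]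
   Context: Notation: $\partial=\partial/\partial\xi$, $\bar\partial=\partial/\partial\bar\xi$. The space of oriented lines in $\mathbb{R}^3=\mathbb{C}\oplus\mathbb{R}$ is identified with $TS^2$: $(\xi,\eta)$, with $\xi$ the stereographic coordinate (projection from the south pole) of the direction and $\eta$ representing the tangent vector $\eta\partial_\xi+\bar\eta\partial_{\bar\xi}$, corresponds to the line $z=\frac{2(\eta-\bar\eta\xi^2)+2\xi(1+\xi\bar\xi)r}{(1+\xi\bar\xi)^2}$, $t=\frac{-2(\eta\bar\xi+\bar\eta\xi)+(1-\xi^2\bar\xi^2)r}{(1+\xi\bar\xi)^2}$, $r\in\mathbb{R}$, where $z=x^1+ix^2$, $t=x^3$. A point of $S$ whose oriented normal has direction $\xi$ is umbilic iff $\bar\partial F(\xi)=0$. With $\xi=Re^{i\theta}$ write $\bar\partial F=\sum_{k\ge0}G_k(\theta)e^{-ik\theta}R^k$, so $G_k(\theta)=\sum_{n=0}^k(k-n+1)A_{n\,k-n+1}e^{2in\theta}$. The isolated umbilic point $\xi=0$ is non-degenerate of order $N$ if $G_k\equiv0$ for $k<N$ and $G_N(\theta)\neq 0$ for all $\theta$. *)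

theory Defs
  imports "HOL-Analysis.Analysis" "HOL-Computational_Algebra.Polynomial"
begin

definition wirt_d :: "(complex \<Rightarrow> complex) \<Rightarrow> complex \<Rightarrow> complex" where
  "wirt_d f z = (frechet_derivative f (at z) 1 - \<i> * frechet_derivative f (at z) \<i>) / 2"

definition wirt_dbar :: "(complex \<Rightarrow> complex) \<Rightarrow> complex \<Rightarrow> complex" where
  "wirt_dbar f z = (frechet_derivative f (at z) 1 + \<i> * frechet_derivative f (at z) \<i>) / 2"

definition power_series_rep :: "(nat \<Rightarrow> nat \<Rightarrow> complex) \<Rightarrow> (complex \<Rightarrow> complex) \<Rightarrow> real \<Rightarrow> bool" where
  "power_series_rep A F \<rho> \<longleftrightarrow> 0 < \<rho> \<and>
     (\<forall>\<xi>\<in>ball 0 \<rho>. ((\<lambda>(n, m). A n m * \<xi> ^ n * cnj \<xi> ^ m) has_sum F \<xi>) UNIV)"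

definition reality_condition :: "(complex \<Rightarrow> complex) \<Rightarrow> real \<Rightarrow> bool" where
  "reality_condition F \<rho> \<longleftrightarrow>
     (\<forall>\<xi>\<in>ball 0 \<rho>.
        wirt_d (\<lambda>z. F z / (1 + z * cnj z)^2) \<xi> =
        wirt_dbar (\<lambda>z. cnj (F z) / (1 + z * cnj z)^2) \<xi>)"

definition isolated_umbilic_at0 :: "(complex \<Rightarrow> complex) \<Rightarrow> bool" where
  "isolated_umbilic_at0 F \<longleftrightarrow> wirt_dbar F 0 = 0 \<and>
     (\<exists>\<epsilon>>0. \<forall>\<xi>. 0 < norm \<xi> \<and> norm \<xi> < \<epsilon> \<longrightarrow> wirt_dbar F \<xi> \<noteq> 0)"

definition G_coeff :: "(nat \<Rightarrow> nat \<Rightarrow> complex) \<Rightarrow> nat \<Rightarrow> real \<Rightarrow> complex" where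
  "G_coeff A k \<theta> = (\<Sum>n=0..k. of_nat (k - n + 1) * A n (k - n + 1) * exp (2 * \<i> * of_nat n * of_real \<theta>))"

definition nondegenerate_order :: "(nat \<Rightarrow> nat \<Rightarrow> complex) \<Rightarrow> nat \<Rightarrow> bool" where
  "nondegenerate_order A N \<longleftrightarrow>
     (\<forall>k<N. \<forall>\<theta>. G_coeff A k \<theta> = 0) \<and> (\<forall>\<theta>. G_coeff A N \<theta> \<noteq> 0)"

definition P_poly :: "(nat \<Rightarrow> nat \<Rightarrow> complex) \<Rightarrow> nat \<Rightarrow> complex poly" where
  "P_poly A N = (\<Sum>n=0..N. monom (of_nat (N - n + 1) * A n (N - n + 1) / A N 1) n)"

definition Delta :: "(nat \<Rightarrow> complex) \<Rightarrow> nat \<Rightarrow> nat \<Rightarrow> complex" where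
  "Delta \<zeta> N k = (\<Sum>I\<in>{I. I \<subseteq> {1..N} \<and> card I = k}. \<Prod>i\<in>I. \<zeta> i) / of_nat (N choose k)"

end

theory Submission
  imports Defs
begin

(* Multiplying the reality condition by (1 + xi conj xi)^3 says that (1 + xi conj xi) dF - 2 conj xi F
   is real.  Since the coefficients of a convergent series in xi and conj xi are unique, its
   coefficients c a b = (a + 1) A (a + 1) b + (a - 2) A a (b - 1) satisfy c a b = conj (c b a).
   Non-degeneracy of order N kills A n m for m >= 1 and n + m <= N, so on the line a + b = N these
   relations read (N - k) A (N - k) (k + 1) = (k + 2) conj (A (k + 2) (N - k - 1)).  By Vieta's
   formulas binom N k * A N 1 * Delta k = (-1)^k (k + 1) A (N - k) (k + 1), and the identity
   (k + 1)(k + 2) binom N (k + 2) = (N - k)(N - k - 1) binom N k turns the coefficient relations into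
   A N 1 * Delta k = (-1)^N conj (A N 1 * Delta (N - 2 - k)).  The case k = 0 gives
   |Delta (N - 2)| = 1 and A N 1 * Delta (N - 2) = (-1)^N conj (A N 1), and dividing by it gives the
   remaining identities. *)

lemma trig_poly_coeffs_eq_0:
  fixes c :: "nat \<Rightarrow> complex"
  assumes vanish: "\<And>\<theta>::real. (\<Sum>n=0..k. c n * exp (2 * \<i> * of_nat n * of_real \<theta>)) = 0"
    and "j \<le> k"
  shows "c j = 0"
proof -
  define p where "p = (\<Sum>n=0..k. monom (c n) n)"
  have roots: "poly p w = 0" if "w \<in> sphere 0 1" for w
  proof -
    have "w \<noteq> 0"
      using that by auto
    then have "w = exp (\<i> * of_real (Arg w))"
      using Arg_eq[of w] that by simp
    then obtain t :: real where w: "w = exp (\<i> * of_real t)"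
      by blast
    have "w ^ n = exp (2 * \<i> * of_nat n * of_real (t / 2))" for n
      unfolding w by (simp add: exp_of_nat_mult[symmetric] mult_ac)
    then show ?thesis
      using vanish[of "t / 2"] by (simp add: p_def poly_sum poly_monom)
  qed
  have "infinite (sphere (0::complex) 1)"
  proof
    assume "finite (sphere (0::complex) 1)"
    moreover have "connected (sphere (0::complex) 1)"
      by (simp add: connected_sphere)
    ultimately have "sphere (0::complex) 1 = {} \<or> (\<exists>a. sphere (0::complex) 1 = {a})"
      by (simp add: connected_finite_iff_sing)
    moreover have "1 \<in> sphere (0::complex) 1" "-1 \<in> sphere (0::complex) 1"
      by auto
    ultimately show False
      by (metis empty_iff singletonD one_neq_neg_one)
  qed
  moreover have "sphere 0 1 \<subseteq> {w. poly p w = 0}"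
    using roots by blast
  ultimately have "infinite {w. poly p w = 0}"
    using finite_subset by blast
  then have "p = 0"
    using poly_roots_finite by blast
  then have "coeff p j = 0"
    by simp
  then show ?thesis
    using \<open>j \<le> k\<close> by (simp add: p_def coeff_sum coeff_monom)
qed

lemma nondegenerate_order_coeff_eq_0:
  assumes "nondegenerate_order A N" and "1 \<le> m" and "n + m \<le> N"
  shows "A n m = 0"
proof -
  define k where "k = n + m - 1"
  have k: "k < N" "n \<le> k" "k - n + 1 = m"
    using assms(2,3) by (auto simp: k_def)
  then have "G_coeff A k \<theta> = 0" for \<theta>
    using assms(1) by (simp add: nondegenerate_order_def)
  then have "of_nat (k - n + 1) * A n (k - n + 1) = 0"
    using trig_poly_coeffs_eq_0[of "\<lambda>j. of_nat (k - j + 1) * A j (k - j + 1)" k n] \<open>n \<le> k\<close>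
    by (simp add: G_coeff_def)
  then show ?thesis
    using k(3) by (metis mult_eq_0_iff of_nat_neq_0 Suc_eq_plus1)
qed

section \<open>Vieta's formulas and the quantities Delta\<close>

lemma coeff_prod_linear_factors:
  fixes \<zeta> :: "'a \<Rightarrow> 'b::comm_ring_1"
  assumes "finite S" and "k \<le> card S"
  shows "coeff (\<Prod>i\<in>S. [:- \<zeta> i, 1:]) (card S - k) = (-1) ^ k * (\<Sum>I | I \<subseteq> S \<and> card I = k. \<Prod>i\<in>I. \<zeta> i)"
proof -
  have "(\<Prod>i\<in>S. [:- \<zeta> i, 1:]) = (\<Prod>i\<in>S. [:- \<zeta> i:] + [:0, 1:])"
    by simp
  also have "\<dots> = (\<Sum>I\<in>Pow S. (\<Prod>i\<in>I. [:- \<zeta> i:]) * (\<Prod>i\<in>S - I. [:0, 1:]))"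
    by (rule prod_add[OF assms(1)])
  also have "\<dots> = (\<Sum>I\<in>Pow S. monom ((-1) ^ card I * (\<Prod>i\<in>I. \<zeta> i)) (card S - card I))"
  proof (intro sum.cong refl)
    fix I assume "I \<in> Pow S"
    then have "finite I" and "I \<subseteq> S"
      using assms(1) finite_subset by auto
    then have "card (S - I) = card S - card I"
      by (simp add: card_Diff_subset)
    then show "(\<Prod>i\<in>I. [:- \<zeta> i:]) * (\<Prod>i\<in>S - I. [:0, 1:]) = monom ((-1) ^ card I * (\<Prod>i\<in>I. \<zeta> i)) (card S - card I)"
      by (simp add: prod_to_poly monom_altdef prod_uminus mult_ac)
  qed
  finally have "coeff (\<Prod>i\<in>S. [:- \<zeta> i, 1:]) (card S - k)
      = (\<Sum>I\<in>Pow S. if card I = k then (-1) ^ k * (\<Prod>i\<in>I. \<zeta> i) else 0)"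
  proof (simp only: coeff_sum, intro sum.cong refl)
    fix I assume "I \<in> Pow S"
    then have "card I \<le> card S"
      using assms(1) by (simp add: card_mono)
    then show "coeff (monom ((-1) ^ card I * (\<Prod>i\<in>I. \<zeta> i)) (card S - card I)) (card S - k)
        = (if card I = k then (-1) ^ k * (\<Prod>i\<in>I. \<zeta> i) else 0)"
      using assms(2) by (auto simp: coeff_monom)
  qed
  also have "\<dots> = (\<Sum>I \<in> {I \<in> Pow S. card I = k}. (-1) ^ k * (\<Prod>i\<in>I. \<zeta> i))"
    using assms(1) by (simp only: sum.inter_filter finite_Pow_iff)
  also have "{I \<in> Pow S. card I = k} = {I. I \<subseteq> S \<and> card I = k}"
    by auto
  finally show ?thesis
    by (simp only: sum_distrib_left)
qed

lemma Delta_0 [simp]: "Delta \<zeta> N 0 = 1"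
proof -
  have "{I. I \<subseteq> {1..N} \<and> card I = 0} = {{}}"
    using finite_subset[of _ "{1..N}"] by auto
  then show ?thesis
    by (simp add: Delta_def)
qed

lemma Delta_eq_coeff:
  assumes P: "P_poly A N = (\<Prod>i=1..N. [:- \<zeta> i, 1:])" and "A N 1 \<noteq> 0" and "k \<le> N"
  shows "of_nat (N choose k) * A N 1 * Delta \<zeta> N k = (-1) ^ k * of_nat (k + 1) * A (N - k) (k + 1)"
proof -
  have "coeff (P_poly A N) (N - k) = of_nat (k + 1) * A (N - k) (k + 1) / A N 1"
    using \<open>k \<le> N\<close> by (simp add: P_poly_def coeff_sum coeff_monom)
  moreover have "coeff (P_poly A N) (N - k) = (-1) ^ k * of_nat (N choose k) * Delta \<zeta> N k"
    using coeff_prod_linear_factors[of "{1..N}" k \<zeta>] \<open>k \<le> N\<close> unfolding P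
    by (simp add: Delta_def)
  ultimately have e: "(-1) ^ k * of_nat (N choose k) * Delta \<zeta> N k * A N 1 = of_nat (k + 1) * A (N - k) (k + 1)"
    using \<open>A N 1 \<noteq> 0\<close> by (simp add: field_simps)
  moreover have "(-1::complex) ^ k * (-1) ^ k = 1"
    by (simp flip: power_add)
  ultimately have "of_nat (N choose k) * A N 1 * Delta \<zeta> N k
      = ((-1) ^ k * (-1) ^ k) * (of_nat (N choose k) * A N 1 * Delta \<zeta> N k)"
    by simp
  also have "\<dots> = (-1) ^ k * ((-1) ^ k * of_nat (N choose k) * Delta \<zeta> N k * A N 1)"
    by (simp only: mult_ac)
  also have "\<dots> = (-1) ^ k * of_nat (k + 1) * A (N - k) (k + 1)"
    unfolding e by (simp only: mult.assoc)
  finally show ?thesis .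
qed

lemma choose_add_2_mult: "(k + 1) * (k + 2) * (N choose (k + 2)) = (N - k) * (N - k - 1) * (N choose k)"
proof -
  have step: "Suc j * (N choose Suc j) = (N - j) * (N choose j)" for j
    by (metis binomial_absorption binomial_absorb_comp)
  have "(k + 1) * (k + 2) * (N choose (k + 2)) = (k + 1) * ((N - Suc k) * (N choose Suc k))"
    using step[of "Suc k"] by (metis add_2_eq_Suc' Suc_eq_plus1 mult.assoc)
  also have "\<dots> = (N - Suc k) * (Suc k * (N choose Suc k))"
    by (metis Suc_eq_plus1 mult.left_commute)
  also have "\<dots> = (N - Suc k) * ((N - k) * (N choose k))"
    by (simp only: step)
  also have "\<dots> = (N - k) * (N - k - 1) * (N choose k)"
    by (simp add: mult_ac)
  finally show ?thesis .
qed

lemma Delta_reflection: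
  assumes P: "P_poly A N = (\<Prod>i=1..N. [:- \<zeta> i, 1:])" and Y: "A N 1 \<noteq> 0" and "k + 2 \<le> N"
    and sym: "of_nat (N - k) * A (N - k) (k + 1) = of_nat (k + 2) * cnj (A (k + 2) (N - k - 1))"
  shows "A N 1 * Delta \<zeta> N k = (-1) ^ N * cnj (A N 1 * Delta \<zeta> N (N - 2 - k))"
proof -
  define c c' :: complex where "c = of_nat (N choose k)" and "c' = of_nat (N choose (k + 2))"
  define a1 a2 b1 b2 :: complex
    where "a1 = of_nat (k + 1)" and "a2 = of_nat (k + 2)" and "b1 = of_nat (N - k)" and "b2 = of_nat (N - k - 1)"
  define s s' t :: complex where "s = (-1) ^ k" and "s' = (-1) ^ (N - 2 - k)" and "t = (-1) ^ N"
  define y d d' where "y = A N 1" and "d = Delta \<zeta> N k" and "d' = Delta \<zeta> N (N - 2 - k)"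
  define u v where "u = A (N - k) (k + 1)" and "v = A (k + 2) (N - k - 1)"
  have "a2 \<noteq> 0"
    unfolding a2_def by (metis add_eq_0_iff_both_eq_0 of_nat_eq_0_iff zero_neq_numeral)
  moreover have "c \<noteq> 0" "c' \<noteq> 0"
    using \<open>k + 2 \<le> N\<close> by (simp_all add: c_def c'_def)
  ultimately have nonzero: "a2 * c * c' \<noteq> 0"
    by simp
  have Dk: "c * y * d = s * a1 * u"
    using Delta_eq_coeff[OF P Y, of k] \<open>k + 2 \<le> N\<close> by (simp add: c_def y_def d_def s_def a1_def u_def)
  have "N choose (N - 2 - k) = N choose (k + 2)" and "N - (N - 2 - k) = k + 2" and "N - 2 - k + 1 = N - k - 1"
    using \<open>k + 2 \<le> N\<close> binomial_symmetric[of "k + 2" N] by auto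
  then have Dk'_raw: "c' * y * d' = s' * b2 * v"
    using Delta_eq_coeff[OF P Y, of "N - 2 - k"] by (simp add: c'_def y_def d'_def s'_def b2_def v_def)
  have Dk': "c' * (cnj y * cnj d') = s' * b2 * cnj v"
    using arg_cong[OF Dk'_raw, of cnj] by (simp add: c'_def s'_def b2_def mult.assoc)
  have "a1 * a2 * c' = b1 * b2 * c"
    unfolding a1_def a2_def b1_def b2_def c_def c'_def
    by (simp only: of_nat_mult[symmetric] choose_add_2_mult)
  moreover have "b1 * u = a2 * cnj v"
    using sym by (simp add: b1_def u_def a2_def v_def)
  moreover have "t * s' = s"
  proof -
    have "N + (N - 2 - k) = k + 2 * (N - 1 - k)"
      using \<open>k + 2 \<le> N\<close> by simp
    then have "t * s' = (-1) ^ (k + 2 * (N - 1 - k))"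
      unfolding t_def s'_def by (simp only: power_add[symmetric])
    then show ?thesis
      by (simp add: s_def power_add power_mult)
  qed
  ultimately have "a2 * c * c' * (y * d) = a2 * c * c' * (t * (cnj y * cnj d'))"
    using Dk Dk' by algebra
  then show ?thesis
    using nonzero by (simp add: y_def d_def d'_def t_def)
qed

lemma Delta_identities:
  assumes P: "P_poly A N = (\<Prod>i=1..N. [:- \<zeta> i, 1:])" and Y: "A N 1 \<noteq> 0" and "3 \<le> N"
    and symmetry: "\<And>k. k + 3 \<le> N \<Longrightarrow>
      of_nat (N - k) * A (N - k) (k + 1) = of_nat (k + 2) * cnj (A (k + 2) (N - k - 1))"
  shows "norm (Delta \<zeta> N (N - 2)) = 1"
    and "k + 3 \<le> N \<Longrightarrow> Delta \<zeta> N k = Delta \<zeta> N (N - 2) * cnj (Delta \<zeta> N (N - 2 - k))"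
proof -
  define t :: complex where "t = (-1) ^ N"
  have t: "cnj t = t" "t * t = 1" "norm t = 1"
    by (simp_all add: t_def norm_power flip: power_add)
  define D where "D = Delta \<zeta> N (N - 2)"
  have D_eq: "A N 1 = t * (cnj (A N 1) * cnj D)"
    using Delta_reflection[OF P Y, of 0] symmetry[of 0] \<open>3 \<le> N\<close> by (simp add: t_def D_def)
  have "norm (A N 1) = norm (t * (cnj (A N 1) * cnj D))"
    by (rule arg_cong[OF D_eq])
  also have "\<dots> = norm (A N 1) * norm D"
    by (simp add: norm_mult t)
  finally show "norm D = 1"
    using Y by simp
  have "cnj (A N 1) = t * (A N 1 * D)"
    using arg_cong[OF D_eq, of cnj] t by simp
  then have yD: "A N 1 * D = t * cnj (A N 1)"
    using t by (metis mult.assoc mult_1)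
  assume "k + 3 \<le> N"
  then have "A N 1 * Delta \<zeta> N k = t * (cnj (A N 1) * cnj (Delta \<zeta> N (N - 2 - k)))"
    using Delta_reflection[OF P Y, of k] symmetry[of k] by (simp add: t_def)
  also have "\<dots> = A N 1 * (D * cnj (Delta \<zeta> N (N - 2 - k)))"
    using yD by (simp add: mult.assoc)
  finally show "Delta \<zeta> N k = D * cnj (Delta \<zeta> N (N - 2 - k))"
    using Y by simp
qed

section \<open>Power series in xi and conj xi\<close>

definition powser2_conv :: "(nat \<Rightarrow> nat \<Rightarrow> complex) \<Rightarrow> real \<Rightarrow> bool" where
  "powser2_conv C \<rho> \<longleftrightarrow> (\<forall>r. 0 \<le> r \<and> r < \<rho> \<longrightarrow> (\<lambda>(n, m). norm (C n m) * r ^ (n + m)) summable_on UNIV)"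

definition powser2 :: "(nat \<Rightarrow> nat \<Rightarrow> complex) \<Rightarrow> complex \<Rightarrow> complex" where
  "powser2 C \<xi> = (\<Sum>\<^sub>\<infinity>(n, m). C n m * \<xi> ^ n * cnj \<xi> ^ m)"

lemma has_sum_powser2:
  assumes "powser2_conv C \<rho>" and "norm \<xi> < \<rho>"
  shows "((\<lambda>(n, m). C n m * \<xi> ^ n * cnj \<xi> ^ m) has_sum powser2 C \<xi>) UNIV"
proof -
  have "(\<lambda>(n, m). norm (C n m) * norm \<xi> ^ (n + m)) summable_on UNIV"
    using assms unfolding powser2_conv_def by auto
  moreover have "(\<lambda>(n, m). norm (C n m) * norm \<xi> ^ (n + m)) = (\<lambda>p. norm ((\<lambda>(n, m). C n m * \<xi> ^ n * cnj \<xi> ^ m) p))"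
    by (auto simp: norm_mult norm_power power_add)
  ultimately have "(\<lambda>(n, m). C n m * \<xi> ^ n * cnj \<xi> ^ m) summable_on UNIV"
    by (simp add: abs_summable_summable)
  then show ?thesis
    unfolding powser2_def by (rule has_sum_infsum)
qed

lemma power_series_rep_powser2:
  assumes "power_series_rep A F \<rho>"
  shows "powser2_conv A \<rho>" and "norm \<xi> < \<rho> \<Longrightarrow> F \<xi> = powser2 A \<xi>"
proof -
  show "F \<xi> = powser2 A \<xi>" if "norm \<xi> < \<rho>"
  proof -
    have "((\<lambda>(n, m). A n m * \<xi> ^ n * cnj \<xi> ^ m) has_sum F \<xi>) UNIV"
      using assms that by (simp add: power_series_rep_def)
    then show ?thesis
      by (simp add: powser2_def infsumI)
  qed
  show "powser2_conv A \<rho>"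
    unfolding powser2_conv_def
  proof safe
    fix r :: real assume r: "0 \<le> r" "r < \<rho>"
    then have "of_real r \<in> ball (0::complex) \<rho>"
      by simp
    then have "((\<lambda>(n, m). A n m * of_real r ^ n * cnj (of_real r) ^ m) has_sum F (of_real r)) UNIV"
      using assms unfolding power_series_rep_def by blast
    then have "(\<lambda>(n, m). A n m * of_real r ^ n * cnj (of_real r) ^ m) summable_on UNIV"
      by (rule has_sum_imp_summable)
    then have "(\<lambda>p. norm ((\<lambda>(n, m). A n m * of_real r ^ n * cnj (of_real r) ^ m) p)) summable_on UNIV"
      using summable_on_iff_abs_summable_on_complex by blast
    moreover have "(\<lambda>p. norm ((\<lambda>(n, m). A n m * of_real r ^ n * cnj (of_real r) ^ m) p)) = (\<lambda>(n, m). norm (A n m) * r ^ (n + m))"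
      using r by (auto simp: fun_eq_iff norm_mult norm_power power_add)
    ultimately show "(\<lambda>(n, m). norm (A n m) * r ^ (n + m)) summable_on UNIV"
      by simp
  qed
qed

lemma powser_coeffs_eq_0:
  fixes a :: "nat \<Rightarrow> complex"
  assumes "0 < \<rho>" and sums: "\<And>r. 0 < r \<Longrightarrow> r < \<rho> \<Longrightarrow> (\<lambda>d. a d * of_real r ^ d) sums 0"
  shows "a k = 0"
proof (induction k rule: less_induct)
  case (less k)
  define b where "b j = a (j + k)" for j
  have b_sums: "(\<lambda>j. b j * of_real r ^ j) sums 0" if r: "0 < r" "r < \<rho>" for r
  proof -
    have "(\<lambda>j. a (j + k) * of_real r ^ (j + k)) sums (0 - (\<Sum>i<k. a i * of_real r ^ i))"
      using sums_split_initial_segment[OF sums[OF r]] .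
    also have "(\<Sum>i<k. a i * of_real r ^ i) = 0"
      using less by simp
    finally have "(\<lambda>j. a (j + k) * of_real r ^ (j + k) / of_real r ^ k) sums (0 / of_real r ^ k)"
      by (intro sums_divide) simp
    moreover have "a (j + k) * of_real r ^ (j + k) / of_real r ^ k = b j * of_real r ^ j" for j
      using r by (simp add: b_def power_add)
    ultimately show ?thesis
      by simp
  qed
  define g where "g z = (\<Sum>j. b j * z ^ j)" for z :: complex
  have "summable (\<lambda>j. b j * of_real (\<rho> / 2) ^ j)"
    using b_sums[of "\<rho> / 2"] \<open>0 < \<rho>\<close> sums_summable by force
  then have "isCont g 0"
    unfolding g_def by (rule isCont_powser) (use \<open>0 < \<rho>\<close> in simp)
  then have "isCont (\<lambda>r::real. g (of_real r)) 0"
    using isCont_o2[where f="of_real :: real \<Rightarrow> complex" and a=0 and g=g] by (simp add: continuous_intros)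
  then have lim: "((\<lambda>r::real. g (of_real r)) \<longlongrightarrow> g 0) (at_right 0)"
    by (simp add: isCont_def filterlim_at_split)
  have "eventually (\<lambda>r. g (of_real r) = 0) (at_right (0::real))"
    using eventually_at_right_real[OF \<open>0 < \<rho>\<close>]
    by eventually_elim (use b_sums in \<open>auto simp: g_def sums_iff\<close>)
  then have "((\<lambda>r::real. g (of_real r)) \<longlongrightarrow> 0) (at_right 0)"
    by (rule tendsto_eventually)
  then have "g 0 = 0"
    using tendsto_unique[OF _ lim] by simp
  then show ?case
    by (simp add: g_def b_def)
qed

lemma powser2_diagonal_sums:
  assumes "powser2_conv C \<rho>" and "norm \<xi> < \<rho>"
  shows "(\<lambda>d. \<Sum>j\<le>d. C j (d - j) * \<xi> ^ j * cnj \<xi> ^ (d - j)) sums powser2 C \<xi>"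
proof -
  define f where "f = (\<lambda>(n, m). C n m * \<xi> ^ n * cnj \<xi> ^ m)"
  have "bij_betw (\<lambda>(d, j). (j, d - j)) (SIGMA d:UNIV. {..d}) (UNIV :: (nat \<times> nat) set)"
    by (rule bij_betwI[where g="\<lambda>(n, m). (n + m, n)"]) auto
  then have "((\<lambda>x. f ((\<lambda>(d, j). (j, d - j)) x)) has_sum powser2 C \<xi>) (SIGMA d:UNIV. {..d})"
    using has_sum_reindex_bij_betw has_sum_powser2[OF assms] unfolding f_def by blast
  then have "((\<lambda>d. \<Sum>j\<le>d. f (j, d - j)) has_sum powser2 C \<xi>) UNIV"
    by (rule has_sum_SigmaD) (auto intro: has_sum_finiteI)
  then show ?thesis
    by (simp add: f_def has_sum_imp_sums)
qed

lemma power_mult_cnj_power_polar: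
  assumes "j \<le> d"
  shows "(of_real r * exp (\<i> * of_real \<theta>)) ^ j * cnj (of_real r * exp (\<i> * of_real \<theta>)) ^ (d - j)
    = of_real r ^ d * exp (- \<i> * of_nat d * of_real \<theta>) * exp (2 * \<i> * of_nat j * of_real \<theta>)"
proof -
  have "(of_real r * exp (\<i> * of_real \<theta>)) ^ j * cnj (of_real r * exp (\<i> * of_real \<theta>)) ^ (d - j)
      = of_real r ^ (j + (d - j)) * (exp (of_nat j * (\<i> * of_real \<theta>)) * exp (of_nat (d - j) * (- \<i> * of_real \<theta>)))"
    by (simp add: power_mult_distrib power_add exp_cnj mult_ac flip: exp_of_nat_mult)
  also have "\<dots> = of_real r ^ d * (exp (- \<i> * of_nat d * of_real \<theta>) * exp (2 * \<i> * of_nat j * of_real \<theta>))"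
    using assms by (simp add: exp_add[symmetric] of_nat_diff algebra_simps)
  finally show ?thesis
    by (simp add: mult.assoc)
qed

lemma powser2_coeffs_eq_0:
  assumes conv: "powser2_conv C \<rho>" and "0 < \<rho>" and zero: "\<And>\<xi>. norm \<xi> < \<rho> \<Longrightarrow> powser2 C \<xi> = 0"
  shows "C n m = 0"
proof -
  define T where "T \<theta> d = (\<Sum>j\<le>d. C j (d - j) * exp (2 * \<i> * of_nat j * of_real \<theta>))" for \<theta> :: real and d
  have "T \<theta> d = 0" for \<theta> d
  proof -
    define w where "w = exp (\<i> * of_real \<theta>)"
    define e where "e d = exp (- \<i> * of_nat d * of_real \<theta>)" for d :: nat
    note monomial = power_mult_cnj_power_polar[where \<theta>=\<theta>, folded w_def e_def]
    have "(\<lambda>d. (e d * T \<theta> d) * of_real r ^ d) sums 0" if "0 < r" "r < \<rho>" for r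
    proof -
      have "norm (of_real r * w) < \<rho>"
        using that by (simp add: w_def norm_mult)
      then have "(\<lambda>d. \<Sum>j\<le>d. C j (d - j) * (of_real r * w) ^ j * cnj (of_real r * w) ^ (d - j))
          sums powser2 C (of_real r * w)"
        by (rule powser2_diagonal_sums[OF conv])
      moreover have "powser2 C (of_real r * w) = 0"
        using zero \<open>norm (of_real r * w) < \<rho>\<close> by blast
      moreover have "(\<Sum>j\<le>d. C j (d - j) * (of_real r * w) ^ j * cnj (of_real r * w) ^ (d - j))
          = (\<Sum>j\<le>d. of_real r ^ d * e d * (C j (d - j) * exp (2 * \<i> * of_nat j * of_real \<theta>)))" for d
      proof (intro sum.cong refl)
        fix j assume "j \<in> {..d}"
        then have "C j (d - j) * ((of_real r * w) ^ j * cnj (of_real r * w) ^ (d - j))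
            = C j (d - j) * (of_real r ^ d * e d * exp (2 * \<i> * of_nat j * of_real \<theta>))"
          by (simp only: monomial atMost_iff)
        then show "C j (d - j) * (of_real r * w) ^ j * cnj (of_real r * w) ^ (d - j)
            = of_real r ^ d * e d * (C j (d - j) * exp (2 * \<i> * of_nat j * of_real \<theta>))"
          by (simp only: mult_ac)
      qed
      ultimately show ?thesis
        by (simp add: T_def sum_distrib_left mult_ac)
    qed
    then have "e d * T \<theta> d = 0"
      by (rule powser_coeffs_eq_0[OF \<open>0 < \<rho>\<close>])
    then show ?thesis
      by (simp add: e_def)
  qed
  then have "C n (n + m - n) = 0"
    using trig_poly_coeffs_eq_0[of "\<lambda>j. C j (n + m - j)" "n + m" n] by (simp add: T_def atLeast0AtMost)
  then show ?thesis
    by simp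
qed

(* Coefficient arrays of xi^i conj xi^j f, df, conj f and dbar f for f = powser2 C. *)
definition coeff_shift :: "nat \<Rightarrow> nat \<Rightarrow> (nat \<Rightarrow> nat \<Rightarrow> complex) \<Rightarrow> nat \<Rightarrow> nat \<Rightarrow> complex" where
  "coeff_shift i j C n m = (if i \<le> n \<and> j \<le> m then C (n - i) (m - j) else 0)"

definition coeff_d :: "(nat \<Rightarrow> nat \<Rightarrow> complex) \<Rightarrow> nat \<Rightarrow> nat \<Rightarrow> complex" where
  "coeff_d C n m = of_nat (n + 1) * C (n + 1) m"

definition coeff_cnj :: "(nat \<Rightarrow> nat \<Rightarrow> complex) \<Rightarrow> nat \<Rightarrow> nat \<Rightarrow> complex" where
  "coeff_cnj C n m = cnj (C m n)"

definition coeff_dbar :: "(nat \<Rightarrow> nat \<Rightarrow> complex) \<Rightarrow> nat \<Rightarrow> nat \<Rightarrow> complex" where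
  "coeff_dbar C n m = of_nat (m + 1) * C n (m + 1)"

lemma has_sum_shift_index_iff:
  fixes g :: "nat \<times> nat \<Rightarrow> 'a::{comm_monoid_add,topological_space}"
  shows "((\<lambda>(n, m). if i \<le> n \<and> j \<le> m then g (n - i, m - j) else 0) has_sum S) UNIV \<longleftrightarrow> (g has_sum S) UNIV"
proof -
  define h where "h = (\<lambda>(n, m). (n + i, m + j))"
  define g' where "g' = (\<lambda>(n, m). if i \<le> n \<and> j \<le> m then g (n - i, m - j) else 0)"
  have "inj_on h UNIV"
    by (auto simp: h_def inj_on_def)
  have "h ` UNIV = {(n, m). i \<le> n \<and> j \<le> m}"
  proof safe
    fix n m assume "i \<le> n" "j \<le> m"
    then show "(n, m) \<in> range h"
      by (intro image_eqI[of _ _ "(n - i, m - j)"]) (auto simp: h_def)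
  qed (auto simp: h_def)
  then have "(g' has_sum S) UNIV \<longleftrightarrow> (g' has_sum S) (h ` UNIV)"
    by (intro has_sum_cong_neutral) (auto simp: g'_def split: if_splits)
  also have "\<dots> \<longleftrightarrow> ((g' \<circ> h) has_sum S) UNIV"
    by (rule has_sum_reindex[OF \<open>inj_on h UNIV\<close>])
  also have "g' \<circ> h = g"
    by (auto simp: g'_def h_def fun_eq_iff)
  finally show ?thesis
    by (simp add: g'_def)
qed

lemma powser2_conv_shift:
  assumes "powser2_conv C \<rho>"
  shows "powser2_conv (coeff_shift i j C) \<rho>"
  unfolding powser2_conv_def
proof safe
  fix r :: real assume "0 \<le> r" "r < \<rho>"
  define G where "G = (\<lambda>(n, m). r ^ (i + j) * (norm (C n m) * r ^ (n + m)))"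
  have "(\<lambda>(n, m). norm (C n m) * r ^ (n + m)) summable_on UNIV"
    using assms \<open>0 \<le> r\<close> \<open>r < \<rho>\<close> unfolding powser2_conv_def by auto
  then have "G summable_on UNIV"
    unfolding G_def case_prod_beta by (rule summable_on_cmult_right)
  then have "((\<lambda>(n, m). if i \<le> n \<and> j \<le> m then G (n - i, m - j) else 0) summable_on UNIV)"
    using has_sum_shift_index_iff[where g=G and i=i and j=j] unfolding summable_on_def by blast
  moreover have "(\<lambda>(n, m). if i \<le> n \<and> j \<le> m then G (n - i, m - j) else 0)
      = (\<lambda>(n, m). norm (coeff_shift i j C n m) * r ^ (n + m))"
  proof (intro ext, clarify)
    fix n m
    show "(if i \<le> n \<and> j \<le> m then G (n - i, m - j) else 0) = norm (coeff_shift i j C n m) * r ^ (n + m)"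
    proof (cases "i \<le> n \<and> j \<le> m")
      case True
      then have "i + j + (n - i + (m - j)) = n + m"
        by simp
      then show ?thesis
        using True by (simp add: G_def coeff_shift_def mult.left_commute flip: power_add)
    qed (auto simp: coeff_shift_def)
  qed
  ultimately show "(\<lambda>(n, m). norm (coeff_shift i j C n m) * r ^ (n + m)) summable_on UNIV"
    by simp
qed

lemma powser2_shift:
  assumes "powser2_conv C \<rho>" and "norm \<xi> < \<rho>"
  shows "powser2 (coeff_shift i j C) \<xi> = \<xi> ^ i * cnj \<xi> ^ j * powser2 C \<xi>"
proof -
  define G where "G = (\<lambda>(n, m). \<xi> ^ i * cnj \<xi> ^ j * (C n m * \<xi> ^ n * cnj \<xi> ^ m))"
  have "(G has_sum (\<xi> ^ i * cnj \<xi> ^ j * powser2 C \<xi>)) UNIV"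
    unfolding G_def case_prod_beta by (rule has_sum_cmult_right[OF has_sum_powser2[OF assms, unfolded case_prod_beta]])
  then have "((\<lambda>(n, m). if i \<le> n \<and> j \<le> m then G (n - i, m - j) else 0)
      has_sum (\<xi> ^ i * cnj \<xi> ^ j * powser2 C \<xi>)) UNIV"
    using has_sum_shift_index_iff[where g=G and i=i and j=j] by blast
  moreover have "(\<lambda>(n, m). if i \<le> n \<and> j \<le> m then G (n - i, m - j) else 0)
      = (\<lambda>(n, m). coeff_shift i j C n m * \<xi> ^ n * cnj \<xi> ^ m)"
  proof (intro ext, clarify)
    fix n m
    show "(if i \<le> n \<and> j \<le> m then G (n - i, m - j) else 0) = coeff_shift i j C n m * \<xi> ^ n * cnj \<xi> ^ m"
    proof (cases "i \<le> n \<and> j \<le> m")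
      case True
      then have "\<xi> ^ n = \<xi> ^ i * \<xi> ^ (n - i)" and "cnj \<xi> ^ m = cnj \<xi> ^ j * cnj \<xi> ^ (m - j)"
        by (simp_all flip: power_add)
      then show ?thesis
        using True by (simp add: G_def coeff_shift_def mult_ac)
    qed (auto simp: coeff_shift_def)
  qed
  ultimately show ?thesis
    unfolding powser2_def by (simp add: infsumI)
qed

lemma powser2_conv_add:
  assumes "powser2_conv C \<rho>" and "powser2_conv D \<rho>"
  shows "powser2_conv (\<lambda>n m. C n m + D n m) \<rho>"
  unfolding powser2_conv_def
proof safe
  fix r :: real assume r: "0 \<le> r" "r < \<rho>"
  have "(\<lambda>p. (\<lambda>(n, m). norm (C n m) * r ^ (n + m)) p + (\<lambda>(n, m). norm (D n m) * r ^ (n + m)) p) summable_on UNIV"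
    using assms r unfolding powser2_conv_def by (intro summable_on_add) auto
  then show "(\<lambda>(n, m). norm (C n m + D n m) * r ^ (n + m)) summable_on UNIV"
  proof (rule summable_on_comparison_test)
    fix p :: "nat \<times> nat"
    show "(\<lambda>(n, m). norm (C n m + D n m) * r ^ (n + m)) p
        \<le> (\<lambda>(n, m). norm (C n m) * r ^ (n + m)) p + (\<lambda>(n, m). norm (D n m) * r ^ (n + m)) p"
      using r by (cases p) (auto simp: distrib_right[symmetric] intro!: mult_right_mono norm_triangle_ineq)
    show "0 \<le> (\<lambda>(n, m). norm (C n m + D n m) * r ^ (n + m)) p"
      using r by (cases p) auto
  qed
qed

lemma powser2_add:
  assumes "powser2_conv C \<rho>" and "powser2_conv D \<rho>" and "norm \<xi> < \<rho>"
  shows "powser2 (\<lambda>n m. C n m + D n m) \<xi> = powser2 C \<xi> + powser2 D \<xi>"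
proof -
  have "((\<lambda>p. (\<lambda>(n, m). C n m * \<xi> ^ n * cnj \<xi> ^ m) p + (\<lambda>(n, m). D n m * \<xi> ^ n * cnj \<xi> ^ m) p)
      has_sum (powser2 C \<xi> + powser2 D \<xi>)) UNIV"
    by (intro has_sum_add has_sum_powser2[OF assms(1,3)] has_sum_powser2[OF assms(2,3)])
  then have "((\<lambda>(n, m). (C n m + D n m) * \<xi> ^ n * cnj \<xi> ^ m) has_sum (powser2 C \<xi> + powser2 D \<xi>)) UNIV"
    by (simp add: case_prod_unfold distrib_right)
  then show ?thesis
    unfolding powser2_def by (rule infsumI)
qed

lemma powser2_conv_scale:
  assumes "powser2_conv C \<rho>"
  shows "powser2_conv (\<lambda>n m. c * C n m) \<rho>"
  unfolding powser2_conv_def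
proof safe
  fix r :: real assume "0 \<le> r" "r < \<rho>"
  then have "(\<lambda>p. norm c * (\<lambda>(n, m). norm (C n m) * r ^ (n + m)) p) summable_on UNIV"
    using assms unfolding powser2_conv_def by (intro summable_on_cmult_right) auto
  then show "(\<lambda>(n, m). norm (c * C n m) * r ^ (n + m)) summable_on UNIV"
    by (simp add: case_prod_unfold norm_mult mult.assoc)
qed

lemma powser2_scale:
  assumes "powser2_conv C \<rho>" and "norm \<xi> < \<rho>"
  shows "powser2 (\<lambda>n m. c * C n m) \<xi> = c * powser2 C \<xi>"
proof -
  have "((\<lambda>p. c * (\<lambda>(n, m). C n m * \<xi> ^ n * cnj \<xi> ^ m) p) has_sum (c * powser2 C \<xi>)) UNIV"
    by (intro has_sum_cmult_right has_sum_powser2[OF assms])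
  then have "((\<lambda>(n, m). (c * C n m) * \<xi> ^ n * cnj \<xi> ^ m) has_sum (c * powser2 C \<xi>)) UNIV"
    by (simp add: case_prod_unfold mult.assoc)
  then show ?thesis
    unfolding powser2_def by (rule infsumI)
qed

lemma has_sum_swap_UNIV:
  fixes f :: "'a \<times> 'b \<Rightarrow> 'c::{comm_monoid_add,topological_space}"
  shows "((\<lambda>(x, y). f (y, x)) has_sum S) UNIV \<longleftrightarrow> (f has_sum S) UNIV"
  using has_sum_swap[where f=f and S=S and A=UNIV and B=UNIV] by simp

lemma powser2_conv_cnj:
  assumes "powser2_conv C \<rho>"
  shows "powser2_conv (coeff_cnj C) \<rho>"
  unfolding powser2_conv_def
proof safe
  fix r :: real assume "0 \<le> r" "r < \<rho>"
  then have "(\<lambda>(n, m). norm (C n m) * r ^ (n + m)) summable_on UNIV"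
    using assms unfolding powser2_conv_def by auto
  then have "(\<lambda>(n, m). (\<lambda>(n, m). norm (C n m) * r ^ (n + m)) (m, n)) summable_on UNIV"
    using has_sum_swap_UNIV unfolding summable_on_def by blast
  then show "(\<lambda>(n, m). norm (coeff_cnj C n m) * r ^ (n + m)) summable_on UNIV"
    by (simp add: coeff_cnj_def add.commute)
qed

lemma powser2_cnj:
  assumes "powser2_conv C \<rho>" and "norm \<xi> < \<rho>"
  shows "powser2 (coeff_cnj C) \<xi> = cnj (powser2 C \<xi>)"
proof -
  define f where "f = (\<lambda>p. cnj ((\<lambda>(n, m). C n m * \<xi> ^ n * cnj \<xi> ^ m) p))"
  have "(f has_sum cnj (powser2 C \<xi>)) UNIV"
    using has_sum_powser2[OF assms] unfolding f_def by (simp only: has_sum_cnj_iff)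
  then have "((\<lambda>(n, m). f (m, n)) has_sum cnj (powser2 C \<xi>)) UNIV"
    by (simp only: has_sum_swap_UNIV)
  moreover have "(\<lambda>(n, m). f (m, n)) = (\<lambda>(n, m). coeff_cnj C n m * \<xi> ^ n * cnj \<xi> ^ m)"
    by (auto simp: f_def coeff_cnj_def fun_eq_iff)
  ultimately show ?thesis
    unfolding powser2_def by (simp add: infsumI)
qed

section \<open>Termwise differentiation\<close>

lemma square_times_power_bounded:
  fixes r r' :: real
  assumes "0 \<le> r" and "r < r'"
  obtains K where "\<And>d. (real d + 1) ^ 2 * r ^ d \<le> K * r' ^ d"
proof -
  define q where "q = r / r'"
  have "0 < r'"
    using assms by simp
  then have q: "0 \<le> q" "q < 1"
    using assms by (auto simp: q_def field_simps)
  define x where "x = sqrt q"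
  have x: "norm x < 1" "x ^ 2 = q"
    using q by (auto simp: x_def)
  have "(\<lambda>d. real d * x ^ d + x ^ d) \<longlonglongrightarrow> 0 + 0"
    by (intro tendsto_add powser_times_n_limit_0 LIMSEQ_power_zero x)
  then have "(\<lambda>d. (real d * x ^ d + x ^ d) ^ 2) \<longlonglongrightarrow> 0"
    using tendsto_power[of _ 0 sequentially 2] by force
  moreover have "(real d * x ^ d + x ^ d) ^ 2 = (real d + 1) ^ 2 * q ^ d" for d
    by (simp add: power2_eq_square algebra_simps x(2)[symmetric] power_mult_distrib flip: power_add power_mult)
  ultimately have "(\<lambda>d. (real d + 1) ^ 2 * q ^ d) \<longlonglongrightarrow> 0"
    by simp
  then have "Bseq (\<lambda>d. (real d + 1) ^ 2 * q ^ d)"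
    using convergent_imp_Bseq convergentI by blast
  then obtain K where K: "\<And>d. norm ((real d + 1) ^ 2 * q ^ d) \<le> K"
    unfolding Bseq_def by blast
  have "(real d + 1) ^ 2 * r ^ d \<le> K * r' ^ d" for d
  proof -
    have "(real d + 1) ^ 2 * r ^ d = ((real d + 1) ^ 2 * q ^ d) * r' ^ d"
      using \<open>0 < r'\<close> by (simp add: q_def power_divide)
    also have "\<dots> \<le> K * r' ^ d"
      using K[of d] q \<open>0 < r'\<close> by (intro mult_right_mono) auto
    finally show ?thesis .
  qed
  then show ?thesis
    using that by blast
qed

lemma powser2_conv_weighted:
  assumes conv: "powser2_conv C \<rho>" and "0 \<le> s" and "s < \<rho>"
  shows "(\<lambda>(n, m). norm (C n m) * (real (n + m) + 1) ^ 2 * s ^ (n + m)) summable_on UNIV"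
proof -
  define r where "r = (s + \<rho>) / 2"
  have r: "s < r" "0 \<le> r" "r < \<rho>"
    using assms(2,3) by (auto simp: r_def)
  obtain K where K: "\<And>d. (real d + 1) ^ 2 * s ^ d \<le> K * r ^ d"
    using square_times_power_bounded[OF \<open>0 \<le> s\<close> \<open>s < r\<close>] by blast
  have "(\<lambda>p. K * (\<lambda>(n, m). norm (C n m) * r ^ (n + m)) p) summable_on UNIV"
    using conv r unfolding powser2_conv_def by (intro summable_on_cmult_right) auto
  then show ?thesis
  proof (rule summable_on_comparison_test)
    fix p :: "nat \<times> nat"
    obtain n m where p: "p = (n, m)"
      by (cases p)
    have "norm (C n m) * ((real (n + m) + 1) ^ 2 * s ^ (n + m)) \<le> norm (C n m) * (K * r ^ (n + m))"
      by (intro mult_left_mono K) auto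
    then show "(\<lambda>(n, m). norm (C n m) * (real (n + m) + 1) ^ 2 * s ^ (n + m)) p
        \<le> K * (\<lambda>(n, m). norm (C n m) * r ^ (n + m)) p"
      by (simp add: p mult_ac)
    show "0 \<le> (\<lambda>(n, m). norm (C n m) * (real (n + m) + 1) ^ 2 * s ^ (n + m)) p"
      using \<open>0 \<le> s\<close> by (simp add: p)
  qed
qed

lemma powser2_conv_d:
  assumes conv: "powser2_conv C \<rho>"
  shows "powser2_conv (coeff_d C) \<rho>"
  unfolding powser2_conv_def
proof safe
  fix s :: real assume s: "0 \<le> s" "s < \<rho>"
  define r where "r = (s + \<rho>) / 2"
  have r: "s < r" "0 < r" "r < \<rho>"
    using s by (auto simp: r_def)
  obtain K where K: "\<And>d. (real d + 1) ^ 2 * s ^ d \<le> K * r ^ d"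
    using square_times_power_bounded[OF s(1) r(1)] by blast
  define G where "G = (\<lambda>(n, m). norm (C n m) * r ^ (n + m))"
  have "G summable_on UNIV"
    using conv r unfolding powser2_conv_def G_def by auto
  then have "G summable_on ((\<lambda>(n, m). (n + 1, m)) ` UNIV)"
    by (rule summable_on_subset) auto
  then have "(G \<circ> (\<lambda>(n, m). (n + 1, m))) summable_on UNIV"
    by (subst (asm) summable_on_reindex) (auto simp: inj_on_def)
  then have "(\<lambda>p. K / r * (G \<circ> (\<lambda>(n, m). (n + 1, m))) p) summable_on UNIV"
    by (rule summable_on_cmult_right)
  then show "(\<lambda>(n, m). norm (coeff_d C n m) * s ^ (n + m)) summable_on UNIV"
  proof (rule summable_on_comparison_test)
    fix p :: "nat \<times> nat"
    obtain n m where p: "p = (n, m)"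
      by (cases p)
    have "real (n + 1) \<le> real (n + m) + 1"
      by simp
    also have "\<dots> \<le> (real (n + m) + 1) ^ 2"
      by (simp add: power2_eq_square)
    finally have "real (n + 1) \<le> (real (n + m) + 1) ^ 2" .
    then have "real (n + 1) * s ^ (n + m) \<le> (real (n + m) + 1) ^ 2 * s ^ (n + m)"
      using s by (intro mult_right_mono) auto
    also have "\<dots> \<le> K * r ^ (n + m)"
      by (rule K)
    also have "\<dots> = K / r * r ^ (n + 1 + m)"
      using r by (simp add: field_simps)
    finally have "norm (C (n + 1) m) * (real (n + 1) * s ^ (n + m)) \<le> norm (C (n + 1) m) * (K / r * r ^ (n + 1 + m))"
      by (intro mult_left_mono) auto
    then show "(\<lambda>(n, m). norm (coeff_d C n m) * s ^ (n + m)) p \<le> K / r * (G \<circ> (\<lambda>(n, m). (n + 1, m))) p"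
      unfolding p G_def coeff_d_def norm_mult norm_of_nat using r by (simp add: mult_ac)
    show "0 \<le> (\<lambda>(n, m). norm (coeff_d C n m) * s ^ (n + m)) p"
      using s by (simp add: p)
  qed
qed

lemma coeff_dbar_eq: "coeff_dbar C = coeff_cnj (coeff_d (coeff_cnj C))"
  by (simp add: coeff_dbar_def coeff_cnj_def coeff_d_def fun_eq_iff)

lemma powser2_conv_dbar: "powser2_conv C \<rho> \<Longrightarrow> powser2_conv (coeff_dbar C) \<rho>"
  unfolding coeff_dbar_eq by (intro powser2_conv_cnj powser2_conv_d)

definition power_taylor_remainder :: "nat \<Rightarrow> 'a::comm_ring_1 \<Rightarrow> 'a \<Rightarrow> 'a" where
  "power_taylor_remainder n x y = x ^ n - y ^ n - of_nat n * y ^ (n - 1) * (x - y)"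

lemma power_taylor_remainder_Suc:
  "power_taylor_remainder (Suc n) x y = x * power_taylor_remainder n x y + of_nat n * y ^ (n - 1) * (x - y) ^ 2"
  by (cases n) (simp_all add: power_taylor_remainder_def algebra_simps power2_eq_square)

lemma mult_norm_power_le:
  fixes y :: "'a::real_normed_div_algebra"
  assumes "norm y \<le> s" and "1 \<le> n"
  shows "s * norm y ^ (n - 1) \<le> s ^ n"
proof -
  have "0 \<le> s"
    using assms(1) norm_ge_zero[of y] by linarith
  then have "s * norm y ^ (n - 1) \<le> s * s ^ (n - 1)"
    using assms(1) by (intro mult_left_mono power_mono) auto
  also have "s * s ^ (n - 1) = s ^ n"
    using assms(2) by (cases n) auto
  finally show ?thesis .
qed

lemma norm_power_taylor_remainder_le:
  fixes x y :: "'a::real_normed_field"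
  assumes x: "norm x \<le> s" and y: "norm y \<le> s" and "0 < s"
  shows "s ^ 2 * norm (power_taylor_remainder n x y) \<le> real n ^ 2 * s ^ n * norm (x - y) ^ 2"
proof (induction n)
  case 0
  then show ?case
    by (simp add: power_taylor_remainder_def)
next
  case (Suc n)
  define E where "E = power_taylor_remainder n x y"
  have "s ^ 2 * norm (power_taylor_remainder (Suc n) x y) = s ^ 2 * norm (x * E + of_nat n * y ^ (n - 1) * (x - y) ^ 2)"
    by (simp add: E_def power_taylor_remainder_Suc)
  also have "\<dots> \<le> s ^ 2 * (norm x * norm E + real n * norm y ^ (n - 1) * norm (x - y) ^ 2)"
    using \<open>0 < s\<close> by (intro mult_left_mono) (auto intro!: order_trans[OF norm_triangle_ineq] simp: norm_mult norm_power)
  also have "\<dots> = norm x * (s ^ 2 * norm E) + real n * (s * (s * norm y ^ (n - 1))) * norm (x - y) ^ 2"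
    by (simp add: algebra_simps power2_eq_square)
  also have "\<dots> \<le> s * (real n ^ 2 * s ^ n * norm (x - y) ^ 2) + real n * (s * s ^ n) * norm (x - y) ^ 2"
  proof (rule add_mono)
    show "norm x * (s ^ 2 * norm E) \<le> s * (real n ^ 2 * s ^ n * norm (x - y) ^ 2)"
      using Suc.IH x \<open>0 < s\<close> by (rule_tac mult_mono) (auto simp: E_def)
    show "real n * (s * (s * norm y ^ (n - 1))) * norm (x - y) ^ 2 \<le> real n * (s * s ^ n) * norm (x - y) ^ 2"
    proof (cases "n = 0")
      case False
      then have "s * (s * norm y ^ (n - 1)) \<le> s * s ^ n"
        using mult_norm_power_le[OF y, of n] \<open>0 < s\<close> by (intro mult_left_mono) auto
      then show ?thesis
        by (rule mult_right_mono[OF mult_left_mono]) auto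
    qed simp
  qed
  also have "\<dots> = (real n ^ 2 + real n) * s ^ Suc n * norm (x - y) ^ 2"
    by (simp add: algebra_simps)
  also have "\<dots> \<le> real (Suc n) ^ 2 * s ^ Suc n * norm (x - y) ^ 2"
    using \<open>0 < s\<close> by (intro mult_right_mono) (auto simp: power2_eq_square algebra_simps)
  finally show ?case .
qed

lemma norm_power_diff_le:
  fixes x y :: "'a::real_normed_field"
  assumes x: "norm x \<le> s" and y: "norm y \<le> s" and "0 < s"
  shows "s * norm (x ^ n - y ^ n) \<le> real n * s ^ n * norm (x - y)"
proof (induction n)
  case 0
  then show ?case
    by simp
next
  case (Suc n)
  have "s * norm (x ^ Suc n - y ^ Suc n) = s * norm (x * (x ^ n - y ^ n) + (x - y) * y ^ n)"
    by (simp add: algebra_simps)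
  also have "\<dots> \<le> s * (norm x * norm (x ^ n - y ^ n) + norm (x - y) * norm y ^ n)"
    using \<open>0 < s\<close> by (intro mult_left_mono) (auto intro!: order_trans[OF norm_triangle_ineq] simp: norm_mult norm_power)
  also have "\<dots> = norm x * (s * norm (x ^ n - y ^ n)) + s * norm y ^ n * norm (x - y)"
    by (simp add: algebra_simps)
  also have "\<dots> \<le> s * (real n * s ^ n * norm (x - y)) + s * s ^ n * norm (x - y)"
  proof (rule add_mono)
    show "norm x * (s * norm (x ^ n - y ^ n)) \<le> s * (real n * s ^ n * norm (x - y))"
      using Suc.IH x \<open>0 < s\<close> by (rule_tac mult_mono) auto
    show "s * norm y ^ n * norm (x - y) \<le> s * s ^ n * norm (x - y)"
      using y \<open>0 < s\<close> by (intro mult_right_mono mult_left_mono power_mono) auto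
  qed
  also have "\<dots> = real (Suc n) * s ^ Suc n * norm (x - y)"
    by (simp add: algebra_simps)
  finally show ?case .
qed

definition monomial_taylor_remainder :: "nat \<Rightarrow> nat \<Rightarrow> complex \<Rightarrow> complex \<Rightarrow> complex" where
  "monomial_taylor_remainder n m x y = x ^ n * cnj x ^ m - y ^ n * cnj y ^ m
     - (of_nat n * y ^ (n - 1) * cnj y ^ m * (x - y) + of_nat m * y ^ n * cnj y ^ (m - 1) * cnj (x - y))"

lemma monomial_taylor_remainder_eq:
  "monomial_taylor_remainder n m x y = power_taylor_remainder n x y * cnj x ^ m + y ^ n * power_taylor_remainder m (cnj x) (cnj y)
     + of_nat n * y ^ (n - 1) * (x - y) * (cnj x ^ m - cnj y ^ m)"
  by (simp add: monomial_taylor_remainder_def power_taylor_remainder_def algebra_simps)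

lemma norm_monomial_taylor_remainder_le:
  assumes x: "norm x \<le> s" and y: "norm y \<le> s" and s: "0 < s"
  shows "s ^ 2 * norm (monomial_taylor_remainder n m x y) \<le> (real (n + m) + 1) ^ 2 * s ^ (n + m) * norm (x - y) ^ 2"
proof -
  define X Y d where "X = cnj x" and "Y = cnj y" and "d = norm (x - y)"
  have X: "norm X \<le> s" and Y: "norm Y \<le> s"
    using x y by (simp_all add: X_def Y_def)
  have dXY: "norm (X - Y) = d"
    by (simp add: X_def Y_def d_def flip: complex_cnj_diff)
  have b1: "s ^ 2 * norm (power_taylor_remainder n x y * X ^ m) \<le> real n ^ 2 * s ^ n * d ^ 2 * s ^ m"
    using norm_power_taylor_remainder_le[OF x y s, of n] X s
    by (simp add: norm_mult norm_power d_def mult.assoc[symmetric])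
       (rule mult_mono, auto intro: power_mono)
  have b2: "s ^ 2 * norm (y ^ n * power_taylor_remainder m X Y) \<le> s ^ n * (real m ^ 2 * s ^ m * d ^ 2)"
    using norm_power_taylor_remainder_le[OF X Y s, of m] y s dXY
    by (simp add: norm_mult norm_power mult.left_commute[of "s ^ 2"])
       (rule mult_mono, auto intro: power_mono)
  have b3: "s ^ 2 * norm (of_nat n * y ^ (n - 1) * (x - y) * (X ^ m - Y ^ m)) \<le> real n * s ^ n * d * (real m * s ^ m * d)"
  proof (cases "n = 0")
    case False
    have "s ^ 2 * norm (of_nat n * y ^ (n - 1) * (x - y) * (X ^ m - Y ^ m)) = real n * (s * norm y ^ (n - 1)) * d * (s * norm (X ^ m - Y ^ m))"
      by (simp add: norm_mult norm_power d_def power2_eq_square)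
    also have "\<dots> \<le> real n * s ^ n * d * (real m * s ^ m * d)"
    proof (rule mult_mono)
      show "real n * (s * norm y ^ (n - 1)) * d \<le> real n * s ^ n * d"
        using mult_norm_power_le[OF y, of n] False by (intro mult_right_mono mult_left_mono) (auto simp: d_def)
      show "s * norm (X ^ m - Y ^ m) \<le> real m * s ^ m * d"
        using norm_power_diff_le[OF X Y s, of m] dXY by simp
    qed (use s in \<open>auto simp: d_def\<close>)
    finally show ?thesis .
  qed simp
  have "s ^ 2 * norm (monomial_taylor_remainder n m x y)
      \<le> s ^ 2 * norm (power_taylor_remainder n x y * X ^ m) + s ^ 2 * norm (y ^ n * power_taylor_remainder m X Y)
        + s ^ 2 * norm (of_nat n * y ^ (n - 1) * (x - y) * (X ^ m - Y ^ m))"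
    unfolding monomial_taylor_remainder_eq X_def Y_def using s
    by (simp add: distrib_left[symmetric] norm_triangle_le norm_triangle_ineq add_mono)
  also have "\<dots> \<le> real n ^ 2 * s ^ n * d ^ 2 * s ^ m + s ^ n * (real m ^ 2 * s ^ m * d ^ 2) + real n * s ^ n * d * (real m * s ^ m * d)"
    using b1 b2 b3 by linarith
  also have "\<dots> = (real n ^ 2 + real m ^ 2 + real n * real m) * s ^ (n + m) * d ^ 2"
    by (simp add: algebra_simps power_add power2_eq_square)
  also have "\<dots> \<le> (real (n + m) + 1) ^ 2 * s ^ (n + m) * d ^ 2"
    using s by (intro mult_right_mono) (auto simp: power2_eq_square algebra_simps)
  finally show ?thesis
    unfolding d_def .
qed

lemma has_sum_powser2_d:
  assumes "powser2_conv C \<rho>" and "norm \<xi> < \<rho>"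
  shows "((\<lambda>(n, m). of_nat n * C n m * \<xi> ^ (n - 1) * cnj \<xi> ^ m) has_sum powser2 (coeff_d C) \<xi>) UNIV"
proof -
  define G where "G = (\<lambda>(n, m). coeff_d C n m * \<xi> ^ n * cnj \<xi> ^ m)"
  have "(G has_sum powser2 (coeff_d C) \<xi>) UNIV"
    unfolding G_def by (rule has_sum_powser2[OF powser2_conv_d[OF assms(1)] assms(2)])
  then have "((\<lambda>(n, m). if 1 \<le> n \<and> 0 \<le> m then G (n - 1, m - 0) else 0) has_sum powser2 (coeff_d C) \<xi>) UNIV"
    using has_sum_shift_index_iff[where g=G and i=1 and j=0] by blast
  moreover have "(\<lambda>(n, m). if 1 \<le> n \<and> 0 \<le> m then G (n - 1, m - 0) else 0)
      = (\<lambda>(n, m). of_nat n * C n m * \<xi> ^ (n - 1) * cnj \<xi> ^ m)"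
    by (auto simp: G_def coeff_d_def fun_eq_iff)
  ultimately show ?thesis
    by simp
qed

lemma has_sum_powser2_dbar:
  assumes "powser2_conv C \<rho>" and "norm \<xi> < \<rho>"
  shows "((\<lambda>(n, m). of_nat m * C n m * \<xi> ^ n * cnj \<xi> ^ (m - 1)) has_sum powser2 (coeff_dbar C) \<xi>) UNIV"
proof -
  define G where "G = (\<lambda>(n, m). coeff_dbar C n m * \<xi> ^ n * cnj \<xi> ^ m)"
  have "(G has_sum powser2 (coeff_dbar C) \<xi>) UNIV"
    unfolding G_def by (rule has_sum_powser2[OF powser2_conv_dbar[OF assms(1)] assms(2)])
  then have "((\<lambda>(n, m). if 0 \<le> n \<and> 1 \<le> m then G (n - 0, m - 1) else 0) has_sum powser2 (coeff_dbar C) \<xi>) UNIV"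
    using has_sum_shift_index_iff[where g=G and i=0 and j=1] by blast
  moreover have "(\<lambda>(n, m). if 0 \<le> n \<and> 1 \<le> m then G (n - 0, m - 1) else 0)
      = (\<lambda>(n, m). of_nat m * C n m * \<xi> ^ n * cnj \<xi> ^ (m - 1))"
    by (auto simp: G_def coeff_dbar_def fun_eq_iff)
  ultimately show ?thesis
    by simp
qed

lemma has_sum_powser2_taylor_remainder:
  assumes conv: "powser2_conv C \<rho>" and "norm \<xi> < \<rho>" and "norm x < \<rho>"
  shows "((\<lambda>(n, m). C n m * monomial_taylor_remainder n m x \<xi>) has_sum
    (powser2 C x - powser2 C \<xi> - (powser2 (coeff_d C) \<xi> * (x - \<xi>) + powser2 (coeff_dbar C) \<xi> * cnj (x - \<xi>)))) UNIV"
proof -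
  define a b where "a = powser2 (coeff_d C) \<xi>" and "b = powser2 (coeff_dbar C) \<xi>"
  note H1 = has_sum_powser2[OF conv \<open>norm x < \<rho>\<close>]
  note H0 = has_sum_powser2[OF conv \<open>norm \<xi> < \<rho>\<close>]
  note Ha = has_sum_powser2_d[OF conv \<open>norm \<xi> < \<rho>\<close>, folded a_def]
  note Hb = has_sum_powser2_dbar[OF conv \<open>norm \<xi> < \<rho>\<close>, folded b_def]
  have "((\<lambda>p. (\<lambda>(n, m). C n m * x ^ n * cnj x ^ m) p + ((-1) * (\<lambda>(n, m). C n m * \<xi> ^ n * cnj \<xi> ^ m) p
           + ((\<xi> - x) * (\<lambda>(n, m). of_nat n * C n m * \<xi> ^ (n - 1) * cnj \<xi> ^ m) p
           + cnj (\<xi> - x) * (\<lambda>(n, m). of_nat m * C n m * \<xi> ^ n * cnj \<xi> ^ (m - 1)) p)))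
        has_sum (powser2 C x + ((-1) * powser2 C \<xi> + ((\<xi> - x) * a + cnj (\<xi> - x) * b)))) UNIV"
    by (intro has_sum_add has_sum_cmult_right H1 H0 Ha Hb)
  moreover have "(\<lambda>p. (\<lambda>(n, m). C n m * x ^ n * cnj x ^ m) p + ((-1) * (\<lambda>(n, m). C n m * \<xi> ^ n * cnj \<xi> ^ m) p
           + ((\<xi> - x) * (\<lambda>(n, m). of_nat n * C n m * \<xi> ^ (n - 1) * cnj \<xi> ^ m) p
           + cnj (\<xi> - x) * (\<lambda>(n, m). of_nat m * C n m * \<xi> ^ n * cnj \<xi> ^ (m - 1)) p)))
      = (\<lambda>(n, m). C n m * monomial_taylor_remainder n m x \<xi>)"
    by (auto simp: monomial_taylor_remainder_def fun_eq_iff algebra_simps)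
  ultimately show ?thesis
    by (simp add: a_def b_def algebra_simps)
qed

lemma powser2_remainder_le:
  assumes conv: "powser2_conv C \<rho>" and "norm \<xi> < s" and "s < \<rho>" and "norm (\<xi> + h) < s"
  shows "norm (powser2 C (\<xi> + h) - powser2 C \<xi> - (powser2 (coeff_d C) \<xi> * h + powser2 (coeff_dbar C) \<xi> * cnj h))
    \<le> (\<Sum>\<^sub>\<infinity>(n, m). norm (C n m) * (real (n + m) + 1) ^ 2 * s ^ (n + m)) / s ^ 2 * norm h ^ 2"
proof -
  define W where "W = (\<lambda>(n, m). norm (C n m) * (real (n + m) + 1) ^ 2 * s ^ (n + m))"
  have "0 < s"
    using \<open>norm \<xi> < s\<close> norm_ge_zero[of \<xi>] by linarith
  have "(W has_sum infsum W UNIV) UNIV"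
    using powser2_conv_weighted[OF conv _ \<open>s < \<rho>\<close>] \<open>0 < s\<close> unfolding W_def by (simp add: has_sum_infsum)
  then have "((\<lambda>p. W p * (norm h ^ 2 / s ^ 2)) has_sum (infsum W UNIV * (norm h ^ 2 / s ^ 2))) UNIV"
    by (rule has_sum_cmult_left)
  moreover have "((\<lambda>(n, m). C n m * monomial_taylor_remainder n m (\<xi> + h) \<xi>) has_sum
      (powser2 C (\<xi> + h) - powser2 C \<xi> - (powser2 (coeff_d C) \<xi> * h + powser2 (coeff_dbar C) \<xi> * cnj h))) UNIV"
    using has_sum_powser2_taylor_remainder[OF conv, of \<xi> "\<xi> + h"] assms(2-4) by simp
  moreover have "norm ((\<lambda>(n, m). C n m * monomial_taylor_remainder n m (\<xi> + h) \<xi>) p) \<le> W p * (norm h ^ 2 / s ^ 2)" for p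
  proof -
    obtain n m where p: "p = (n, m)"
      by (cases p)
    have "s ^ 2 * norm (monomial_taylor_remainder n m (\<xi> + h) \<xi>) \<le> (real (n + m) + 1) ^ 2 * s ^ (n + m) * norm h ^ 2"
      using norm_monomial_taylor_remainder_le[of "\<xi> + h" s \<xi> n m] assms(2,4) \<open>0 < s\<close> by simp
    then have "norm (monomial_taylor_remainder n m (\<xi> + h) \<xi>) \<le> (real (n + m) + 1) ^ 2 * s ^ (n + m) * (norm h ^ 2 / s ^ 2)"
      using \<open>0 < s\<close> by (simp add: field_simps)
    then have "norm (C n m) * norm (monomial_taylor_remainder n m (\<xi> + h) \<xi>)
        \<le> norm (C n m) * ((real (n + m) + 1) ^ 2 * s ^ (n + m) * (norm h ^ 2 / s ^ 2))"
      by (rule mult_left_mono) simp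
    then show ?thesis
      by (simp add: W_def p norm_mult mult_ac)
  qed
  ultimately show ?thesis
    unfolding W_def by (simp add: norm_infsum_le mult_ac)
qed

lemma has_derivative_at_quadratic_remainder:
  fixes f :: "'a::real_normed_vector \<Rightarrow> 'b::real_normed_vector"
  assumes "bounded_linear L" and "0 < \<delta>"
    and remainder: "\<And>h. norm h < \<delta> \<Longrightarrow> norm (f (x + h) - f x - L h) \<le> M * norm h ^ 2"
  shows "(f has_derivative L) (at x)"
  unfolding has_derivative_at
proof
  have "eventually (\<lambda>h. h \<noteq> 0 \<and> norm h < \<delta>) (at (0::'a))"
    unfolding eventually_at using \<open>0 < \<delta>\<close> by (intro exI[of _ \<delta>]) (auto simp: dist_norm)
  then have "eventually (\<lambda>h. norm (norm (f (x + h) - f x - L h) / norm h) \<le> M * norm h) (at 0)"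
  proof eventually_elim
    case (elim h)
    then have "norm (f (x + h) - f x - L h) / norm h \<le> M * norm h ^ 2 / norm h"
      using remainder by (intro divide_right_mono) auto
    then show ?case
      using elim by (simp add: power2_eq_square)
  qed
  moreover have "((\<lambda>h. M * norm h) \<longlongrightarrow> 0) (at 0)"
    by (intro tendsto_mult_right_zero tendsto_norm_zero tendsto_ident_at)
  ultimately show "((\<lambda>h. norm (f (x + h) - f x - L h) / norm h) \<longlongrightarrow> 0) (at 0)"
    by (rule Lim_null_comparison)
qed (rule assms(1))

lemma has_derivative_powser2:
  assumes conv: "powser2_conv C \<rho>" and "norm \<xi> < \<rho>"
  shows "(powser2 C has_derivative (\<lambda>h. powser2 (coeff_d C) \<xi> * h + powser2 (coeff_dbar C) \<xi> * cnj h)) (at \<xi>)"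
proof (rule has_derivative_at_quadratic_remainder)
  define s where "s = (norm \<xi> + \<rho>) / 2"
  have "0 < norm \<xi> + \<rho>"
    using \<open>norm \<xi> < \<rho>\<close> norm_ge_zero[of \<xi>] by linarith
  then have s: "0 < s" "norm \<xi> < s" "s < \<rho>"
    using \<open>norm \<xi> < \<rho>\<close> unfolding s_def by auto
  show "bounded_linear (\<lambda>h. powser2 (coeff_d C) \<xi> * h + powser2 (coeff_dbar C) \<xi> * cnj h)"
    by (intro bounded_linear_add bounded_linear_mult_right
        bounded_linear_compose[OF bounded_linear_mult_right bounded_linear_cnj])
  show "0 < s - norm \<xi>"
    using s by simp
  fix h :: complex
  assume "norm h < s - norm \<xi>"
  then have "norm (\<xi> + h) < s"
    using norm_triangle_ineq[of \<xi> h] by linarith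
  then show "norm (powser2 C (\<xi> + h) - powser2 C \<xi> - (powser2 (coeff_d C) \<xi> * h + powser2 (coeff_dbar C) \<xi> * cnj h))
      \<le> (\<Sum>\<^sub>\<infinity>(n, m). norm (C n m) * (real (n + m) + 1) ^ 2 * s ^ (n + m)) / s ^ 2 * norm h ^ 2"
    by (rule powser2_remainder_le[OF conv s(2,3)])
qed

lemma powser2_eq_imp_coeffs_eq:
  assumes "powser2_conv C \<rho>" and "powser2_conv D \<rho>" and "0 < \<rho>"
    and eq: "\<And>\<xi>. norm \<xi> < \<rho> \<Longrightarrow> powser2 C \<xi> = powser2 D \<xi>"
  shows "C n m = D n m"
proof -
  have conv: "powser2_conv (\<lambda>n m. C n m + (-1) * D n m) \<rho>"
    using assms(1,2) by (intro powser2_conv_add powser2_conv_scale)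
  have "powser2 (\<lambda>n m. C n m + (-1) * D n m) \<xi> = 0" if "norm \<xi> < \<rho>" for \<xi>
  proof -
    have "powser2 (\<lambda>n m. C n m + (-1) * D n m) \<xi> = powser2 C \<xi> + powser2 (\<lambda>n m. (-1) * D n m) \<xi>"
      by (rule powser2_add[OF assms(1) powser2_conv_scale[OF assms(2)] that])
    also have "\<dots> = powser2 C \<xi> + (-1) * powser2 D \<xi>"
      by (simp only: powser2_scale[OF assms(2) that])
    finally show ?thesis
      using eq[OF that] by simp
  qed
  then have "C n m + (-1) * D n m = 0"
    by (rule powser2_coeffs_eq_0[OF conv \<open>0 < \<rho>\<close>])
  then show ?thesis
    by simp
qed

section \<open>The reality condition on the coefficients\<close>

lemma has_derivative_imp_wirt:
  assumes "(f has_derivative (\<lambda>h. \<alpha> * h + \<beta> * cnj h)) (at z)"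
  shows "wirt_d f z = \<alpha>" and "wirt_dbar f z = \<beta>"
  using frechet_derivative_at[OF assms, symmetric]
  by (simp_all add: wirt_d_def wirt_dbar_def algebra_simps)

lemma one_plus_mult_cnj_neq_0: "1 + \<xi> * cnj \<xi> \<noteq> 0"
proof -
  have "1 + \<xi> * cnj \<xi> = of_real (1 + norm \<xi> ^ 2)"
    by (simp flip: complex_norm_square)
  then show ?thesis
    by (metis add_pos_nonneg of_real_eq_0_iff zero_less_one zero_le_power2 less_irrefl)
qed

lemma has_derivative_divide_conformal_factor:
  assumes F: "(F has_derivative (\<lambda>h. a * h + b * cnj h)) (at \<xi>)"
  defines "U \<equiv> 1 + \<xi> * cnj \<xi>"
  shows "((\<lambda>z. F z / (1 + z * cnj z) ^ 2) has_derivative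
           (\<lambda>h. (a / U ^ 2 - 2 * F \<xi> * cnj \<xi> / U ^ 3) * h + (b / U ^ 2 - 2 * F \<xi> * \<xi> / U ^ 3) * cnj h)) (at \<xi>)"
proof -
  have "(cnj has_derivative cnj) (at \<xi>)"
    by (rule bounded_linear_imp_has_derivative[OF bounded_linear_cnj])
  then have "((\<lambda>z. 1 + z * cnj z) has_derivative (\<lambda>h. 0 + (\<xi> * cnj h + h * cnj \<xi>))) (at \<xi>)"
    by (intro has_derivative_add has_derivative_const has_derivative_mult has_derivative_ident)
  then have U2: "((\<lambda>z. (1 + z * cnj z) ^ 2) has_derivative
      (\<lambda>h. of_nat 2 * (0 + (\<xi> * cnj h + h * cnj \<xi>)) * (1 + \<xi> * cnj \<xi>) ^ (2 - 1))) (at \<xi>)"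
    by (rule has_derivative_power)
  have "U \<noteq> 0"
    unfolding U_def by (rule one_plus_mult_cnj_neq_0)
  then have "(1 + \<xi> * cnj \<xi>) ^ 2 \<noteq> 0"
    by (simp add: U_def)
  from has_derivative_divide'[OF F U2 this]
  have "((\<lambda>z. F z / (1 + z * cnj z) ^ 2) has_derivative
      (\<lambda>h. ((a * h + b * cnj h) * U ^ 2 - F \<xi> * (of_nat 2 * (0 + (\<xi> * cnj h + h * cnj \<xi>)) * U ^ (2 - 1)))
             / (U ^ 2 * U ^ 2))) (at \<xi>)"
    unfolding U_def .
  moreover have "(\<lambda>h. ((a * h + b * cnj h) * U ^ 2 - F \<xi> * (of_nat 2 * (0 + (\<xi> * cnj h + h * cnj \<xi>)) * U ^ (2 - 1)))
             / (U ^ 2 * U ^ 2))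
      = (\<lambda>h. (a / U ^ 2 - 2 * F \<xi> * cnj \<xi> / U ^ 3) * h + (b / U ^ 2 - 2 * F \<xi> * \<xi> / U ^ 3) * cnj h)"
    using \<open>U \<noteq> 0\<close> by (intro ext) (simp add: field_simps power2_eq_square power3_eq_cube)
  ultimately show ?thesis
    by simp
qed

(* The coefficient of xi^a conj xi^b in (1 + xi conj xi) dF - 2 conj xi F for F = powser2 A. *)
definition reality_coeff :: "(nat \<Rightarrow> nat \<Rightarrow> complex) \<Rightarrow> nat \<Rightarrow> nat \<Rightarrow> complex" where
  "reality_coeff A a b = of_nat (a + 1) * A (a + 1) b + (if b = 0 then 0 else (of_nat a - 2) * A a (b - 1))"

lemma reality_coeff_eq_coeff_combination:
  "reality_coeff A = (\<lambda>n m. coeff_d A n m + coeff_shift 1 1 (coeff_d A) n m + (-2) * coeff_shift 0 1 A n m)"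
  by (intro ext) (auto simp: reality_coeff_def coeff_d_def coeff_shift_def algebra_simps)

lemma powser2_conv_reality_coeff: "powser2_conv A \<rho> \<Longrightarrow> powser2_conv (reality_coeff A) \<rho>"
  unfolding reality_coeff_eq_coeff_combination
  by (intro powser2_conv_add powser2_conv_scale powser2_conv_shift powser2_conv_d)

lemma powser2_reality_coeff:
  assumes conv: "powser2_conv A \<rho>" and "norm \<xi> < \<rho>"
  shows "powser2 (reality_coeff A) \<xi> = (1 + \<xi> * cnj \<xi>) * powser2 (coeff_d A) \<xi> - 2 * cnj \<xi> * powser2 A \<xi>"
proof -
  note conv_d = powser2_conv_d[OF conv]
  note conv_shifts = powser2_conv_shift[OF conv_d, of 1 1] powser2_conv_shift[OF conv, of 0 1]
  have "powser2 (reality_coeff A) \<xi>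
      = powser2 (\<lambda>n m. coeff_d A n m + coeff_shift 1 1 (coeff_d A) n m) \<xi>
        + powser2 (\<lambda>n m. (-2) * coeff_shift 0 1 A n m) \<xi>"
    unfolding reality_coeff_eq_coeff_combination
    by (rule powser2_add[OF powser2_conv_add[OF conv_d conv_shifts(1)] powser2_conv_scale[OF conv_shifts(2)] \<open>norm \<xi> < \<rho>\<close>])
  also have "\<dots> = powser2 (coeff_d A) \<xi> + powser2 (coeff_shift 1 1 (coeff_d A)) \<xi>
        + (-2) * powser2 (coeff_shift 0 1 A) \<xi>"
    by (simp only: powser2_add[OF conv_d conv_shifts(1) \<open>norm \<xi> < \<rho>\<close>] powser2_scale[OF conv_shifts(2) \<open>norm \<xi> < \<rho>\<close>])
  finally show ?thesis
    using \<open>norm \<xi> < \<rho>\<close> by (simp add: powser2_shift[OF conv_d] powser2_shift[OF conv] algebra_simps)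
qed

lemma cnj_powser2_reality_coeff:
  assumes rep: "power_series_rep A F \<rho>" and real: "reality_condition F \<rho>" and \<xi>: "norm \<xi> < \<rho>"
  shows "cnj (powser2 (reality_coeff A) \<xi>) = powser2 (reality_coeff A) \<xi>"
proof -
  note conv = power_series_rep_powser2(1)[OF rep]
  define a b U where "a = powser2 (coeff_d A) \<xi>" and "b = powser2 (coeff_dbar A) \<xi>" and "U = 1 + \<xi> * cnj \<xi>"
  have "U \<noteq> 0"
    unfolding U_def by (rule one_plus_mult_cnj_neq_0)
  have "(powser2 A has_derivative (\<lambda>h. a * h + b * cnj h)) (at \<xi>)"
    unfolding a_def b_def by (rule has_derivative_powser2[OF conv \<xi>])
  from has_derivative_transform_within_open[OF this, of "ball 0 \<rho>"]
  have dF: "(F has_derivative (\<lambda>h. a * h + b * cnj h)) (at \<xi>)"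
    using \<xi> power_series_rep_powser2(2)[OF rep] by auto
  have "((\<lambda>z. cnj (F z)) has_derivative (\<lambda>h. cnj (a * h + b * cnj h))) (at \<xi>)"
    by (rule bounded_linear.has_derivative[OF bounded_linear_cnj dF])
  then have dcF: "((\<lambda>z. cnj (F z)) has_derivative (\<lambda>h. cnj b * h + cnj a * cnj h)) (at \<xi>)"
    by (simp add: algebra_simps)
  have "a / U ^ 2 - 2 * F \<xi> * cnj \<xi> / U ^ 3 = cnj a / U ^ 2 - 2 * cnj (F \<xi>) * \<xi> / U ^ 3"
    using real \<xi> has_derivative_imp_wirt(1)[OF has_derivative_divide_conformal_factor[OF dF]]
      has_derivative_imp_wirt(2)[OF has_derivative_divide_conformal_factor[OF dcF]]
    by (simp add: reality_condition_def U_def)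
  then have "a * U - 2 * cnj \<xi> * F \<xi> = cnj a * U - 2 * \<xi> * cnj (F \<xi>)"
    using \<open>U \<noteq> 0\<close> by (simp add: field_simps power2_eq_square power3_eq_cube)
  moreover have "powser2 (reality_coeff A) \<xi> = a * U - 2 * cnj \<xi> * F \<xi>"
    using powser2_reality_coeff[OF conv \<xi>] power_series_rep_powser2(2)[OF rep \<xi>]
    by (simp add: a_def U_def mult.commute)
  ultimately show ?thesis
    by (simp add: U_def mult.commute)
qed

lemma reality_coeff_hermitian:
  assumes rep: "power_series_rep A F \<rho>" and real: "reality_condition F \<rho>"
  shows "reality_coeff A a b = cnj (reality_coeff A b a)"
proof -
  have conv: "powser2_conv (reality_coeff A) \<rho>"
    using powser2_conv_reality_coeff power_series_rep_powser2(1)[OF rep] .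
  have "0 < \<rho>"
    using rep by (simp add: power_series_rep_def)
  have "powser2 (coeff_cnj (reality_coeff A)) \<xi> = powser2 (reality_coeff A) \<xi>" if "norm \<xi> < \<rho>" for \<xi>
    using powser2_cnj[OF conv that] cnj_powser2_reality_coeff[OF rep real that] by simp
  then have "coeff_cnj (reality_coeff A) a b = reality_coeff A a b"
    by (rule powser2_eq_imp_coeffs_eq[OF powser2_conv_cnj[OF conv] conv \<open>0 < \<rho>\<close>])
  then show ?thesis
    by (simp add: coeff_cnj_def)
qed

lemma leading_coeffs_symmetry:
  assumes real: "\<And>a b. reality_coeff A a b = cnj (reality_coeff A b a)"
    and nd: "nondegenerate_order A N" and "k + 3 \<le> N"
  shows "of_nat (N - k) * A (N - k) (k + 1) = of_nat (k + 2) * cnj (A (k + 2) (N - k - 1))"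
proof -
  note vanish = nondegenerate_order_coeff_eq_0[OF nd]
  have "(of_nat (N - k - 1) - 2) * A (N - k - 1) k = 0"
  proof (cases "k = 0 \<and> 4 \<le> N")
    case True
    have "N - 2 - 1 = N - 3" and "N - 2 + 1 = N - 1"
      using True by auto
    moreover have "A 1 (N - 2) = 0" and "A 0 (N - 3) = 0"
      using True vanish[of "N - 2" 1] vanish[of "N - 3" 0] by auto
    ultimately have "reality_coeff A (N - 2) 0 = of_nat (N - 1) * A (N - 1) 0"
      and "reality_coeff A 0 (N - 2) = 0"
      using True by (simp_all add: reality_coeff_def)
    then have "A (N - 1) 0 = 0"
      using real[of "N - 2" 0] True by simp
    then show ?thesis
      using True by simp
  next
    case False
    then have "k \<noteq> 0 \<or> N = 3"
      using \<open>k + 3 \<le> N\<close> by auto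
    then show ?thesis
      using vanish[of k "N - k - 1"] \<open>k + 3 \<le> N\<close> by auto
  qed
  then have "reality_coeff A (N - k - 1) (k + 1) = of_nat (N - k) * A (N - k) (k + 1)"
    using \<open>k + 3 \<le> N\<close> by (simp add: reality_coeff_def Suc_diff_Suc)
  moreover have "reality_coeff A (k + 1) (N - k - 1) = of_nat (k + 2) * A (k + 2) (N - k - 1)"
    using vanish[of "N - k - 2" "k + 1"] \<open>k + 3 \<le> N\<close> by (simp add: reality_coeff_def)
  ultimately show ?thesis
    using real[of "N - k - 1" "k + 1"] by simp
qed

theorem mainTheorem5:
  fixes A :: "nat \<Rightarrow> nat \<Rightarrow> complex" and F :: "complex \<Rightarrow> complex"
    and \<rho> :: real and N :: nat and \<zeta> :: "nat \<Rightarrow> complex"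
  assumes "power_series_rep A F \<rho>"
    and "reality_condition F \<rho>"
    and "isolated_umbilic_at0 F"
    and "N \<ge> 2"
    and "nondegenerate_order A N"
    and "A N 1 \<noteq> 0"
    and "P_poly A N = (\<Prod>i=1..N. [:- \<zeta> i, 1:])"
  shows "norm (Delta \<zeta> N (N - 2)) = 1 \<and>
         (\<forall>n. 1 \<le> n \<and> n \<le> (N - 1) div 2 - 1 \<longrightarrow>
              Delta \<zeta> N n = Delta \<zeta> N (N - 2) * cnj (Delta \<zeta> N (N - 2 - n)))"
proof (cases "N = 2")
  case True
  then show ?thesis
    by simp
next
  case False
  with \<open>N \<ge> 2\<close> have "3 \<le> N"
    by simp
  have symmetry: "of_nat (N - k) * A (N - k) (k + 1) = of_nat (k + 2) * cnj (A (k + 2) (N - k - 1))"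
    if "k + 3 \<le> N" for k
    by (rule leading_coeffs_symmetry[OF reality_coeff_hermitian[OF assms(1,2)] assms(5) that])
  have "n + 3 \<le> N" if "1 \<le> n" and "n \<le> (N - 1) div 2 - 1" for n
    using that by presburger
  with Delta_identities[OF assms(7,6) \<open>3 \<le> N\<close>] symmetry show ?thesis
    by blast
qed

end
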